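(* Let $X=\{x\in\mathbb{R}^n: Cx\le d\}$ be polyhedral, $g:\mathbb{R}^m\to\mathbb{R}$ be $\sigma_g$-strongly convex with $L_g$-Lipschitz gradient, $A\in\mathbb{R}^{m\times n}$ nonzero, $c\in\mathbb{R}^n$, and $f(x)=g(Ax)+c^Tx$. Assume the optimal set $X^*$ of $f^*=\min_{x\in X}f(x)$ is nonempty. Then there exist unique $t^*\in\mathbb{R}^m$, $s^*\in\mathbb{R}$ with $Ax^*=t^*$, $c^Tx^*=s^*$ for all $x^*\in X^*$, and $X^*=\{x: Ax=t^*,\ c^Tx=s^*,\ Cx\le d\}$. Let $\theta>0$ be a Hoffman constant for this polyhedron: $$\|x-[x]_{X^*}\|\le\theta\left\|\begin{pmatrix}Ax-t^*\\ c^Tx-s^*\\ [Cx-d]_+\end{pmatrix}\right\|\qquad\forall x\in\mathbb{R}^n,$$ and let $c_g=\|\nabla g(t^* )\|$. Then $\nabla f$ is Lipschitz with constant $L_f=L_g\|A\|^2$, and for every $M>0$, with $X_M=\{x\in X: f(x)-f^*\le M\}$, $$f(x)-f^*\ge\frac{\kappa_f}{2}\|x-[x]_{X^*}\|^2\quad\forall x\in X_M,\qquad\kappa_f=\frac{\sigma_g}{\theta^2\,(1+M\sigma_g+2c_g^2)}.$$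
   Context: $\|\cdot\|$ denotes the Euclidean norm (spectral norm for matrices), $[u]_S$ the Euclidean projection onto a closed convex set $S$, and $[v]_+$ the componentwise positive part. $g$ is $\sigma_g$-strongly convex means $g(z)\ge g(w)+\langle\nabla g(w),z-w\rangle+\frac{\sigma_g}{2}\|z-w\|^2$ for all $z,w$, with $\sigma_g>0$. *)

theory Defs
  imports "HOL-Analysis.Analysis"
begin

definition strongly_convex_grad ::
  "('a::real_inner \<Rightarrow> real) \<Rightarrow> ('a \<Rightarrow> 'a) \<Rightarrow> real \<Rightarrow> bool" where
  "strongly_convex_grad g gradg \<sigma> \<longleftrightarrow> \<sigma> > 0 \<and>
     (\<forall>z w. g z \<ge> g w + inner (gradg w) (z - w) + \<sigma> / 2 * (norm (z - w))\<^sup>2)"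

definition is_gradient :: "('a::real_inner \<Rightarrow> real) \<Rightarrow> ('a \<Rightarrow> 'a) \<Rightarrow> bool" where
  "is_gradient g gradg \<longleftrightarrow> (\<forall>z. (g has_derivative (\<lambda>h. inner (gradg z) h)) (at z))"

definition pos_part :: "real ^ 'p \<Rightarrow> real ^ 'p" where
  "pos_part v = (\<chi> i. max 0 (v $ i))"

definition mat_norm :: "real ^ 'n ^ 'm \<Rightarrow> real" where
  "mat_norm A = onorm (\<lambda>x. A *v x)"

end

theory Submission
  imports Defs
begin

text \<open>Strong convexity of \<open>g\<close> makes \<open>A x\<close> constant on the optimal set (the midpoint of two
  minimizers would otherwise be strictly better), hence also \<open>c\<^sup>T x\<close>, so \<open>X\<^sup>*\<close> is the polyhedron
  cut out by \<open>A x = t\<^sup>*\<close>, \<open>c\<^sup>T x = s\<^sup>*\<close>, \<open>C x \<le> d\<close>. For feasible \<open>x\<close> with gap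
  \<open>\<delta> = f x - f\<^sup>*\<close>, strong convexity at \<open>t\<^sup>*\<close> together with first-order optimality of the
  projection of \<open>x\<close> onto \<open>X\<^sup>*\<close> gives \<open>\<sigma>\<^sub>g/2 \<parallel>A x - t\<^sup>*\<parallel>\<^sup>2 \<le> \<delta>\<close> and
  \<open>-c\<^sub>g \<parallel>A x - t\<^sup>*\<parallel> \<le> c\<^sup>T x - s\<^sup>* \<le> \<delta> + c\<^sub>g \<parallel>A x - t\<^sup>*\<parallel>\<close>; with \<open>\<delta> \<le> M\<close> this bounds the
  squared Hoffman residual by \<open>2\<delta>/\<sigma>\<^sub>g (1 + M\<sigma>\<^sub>g + 2c\<^sub>g\<^sup>2)\<close>.\<close>

lemma strongly_convex_gradD:
  assumes "strongly_convex_grad g gradg \<sigma>"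
  shows "0 < \<sigma>" "g w + inner (gradg w) (z - w) + \<sigma> / 2 * (norm (z - w))\<^sup>2 \<le> g z"
  using assms unfolding strongly_convex_grad_def by auto

lemma strongly_convex_grad_midpoint:
  assumes "strongly_convex_grad g gradg \<sigma>"
  shows "g (midpoint z w) + \<sigma> / 8 * (norm (z - w))\<^sup>2 \<le> (g z + g w) / 2"
proof -
  let ?m = "midpoint z w"
  have "z - ?m = (1/2) *\<^sub>R (z - w)" "w - ?m = - ((1/2) *\<^sub>R (z - w))"
    by (simp_all add: midpoint_def algebra_simps flip: scaleR_add_left)
  then show ?thesis
    using strongly_convex_gradD(2)[OF assms, of ?m z] strongly_convex_gradD(2)[OF assms, of ?m w]
    by (simp add: power_divide)
qed

lemma minimizers_same_linear_image:
  fixes L :: "'a::real_inner \<Rightarrow> 'b::real_inner"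
  assumes sc: "strongly_convex_grad g gradg \<sigma>" and "linear L" and "convex S"
    and "x1 \<in> S" "x2 \<in> S"
    and min1: "\<forall>y\<in>S. g (L x1) + inner c x1 \<le> g (L y) + inner c y"
    and min2: "\<forall>y\<in>S. g (L x2) + inner c x2 \<le> g (L y) + inner c y"
  shows "L x1 = L x2"
proof -
  let ?F = "\<lambda>x. g (L x) + inner c x" and ?m = "midpoint x1 x2"
  have "?m \<in> S"
    using assms(3-5) by (meson convex_contains_segment midpoint_in_closed_segment subsetD)
  have "L ?m = midpoint (L x1) (L x2)"
    using \<open>linear L\<close> by (simp add: midpoint_linear_image)
  moreover have "inner c ?m = (inner c x1 + inner c x2) / 2"
    by (simp add: midpoint_def inner_add_right)
  ultimately have "?F ?m + \<sigma> / 8 * (norm (L x1 - L x2))\<^sup>2 \<le> (?F x1 + ?F x2) / 2"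
    using strongly_convex_grad_midpoint[OF sc, of "L x1" "L x2"] by simp
  moreover have "?F x1 \<le> ?F ?m" "?F x2 \<le> ?F x1" "?F x1 \<le> ?F x2"
    using min1 min2 \<open>?m \<in> S\<close> \<open>x1 \<in> S\<close> \<open>x2 \<in> S\<close> by auto
  ultimately have "\<sigma> / 8 * (norm (L x1 - L x2))\<^sup>2 \<le> 0" by argo
  then show ?thesis
    using strongly_convex_gradD(1)[OF sc] by (simp add: mult_le_0_iff)
qed

lemma minimizers_affine_comp_eq:
  fixes L :: "'a::real_inner \<Rightarrow> 'b::real_inner"
  assumes sc: "strongly_convex_grad g gradg \<sigma>" and "linear L" and "convex S" and "x0 \<in> S"
    and min0: "\<forall>y\<in>S. g (L x0) + inner c x0 \<le> g (L y) + inner c y"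
  shows "{x \<in> S. \<forall>y\<in>S. g (L x) + inner c x \<le> g (L y) + inner c y}
    = {x \<in> S. L x = L x0 \<and> inner c x = inner c x0}"
proof (intro set_eqI iffI)
  fix x assume x: "x \<in> {x \<in> S. \<forall>y\<in>S. g (L x) + inner c x \<le> g (L y) + inner c y}"
  then have "L x = L x0"
    using minimizers_same_linear_image[OF sc \<open>linear L\<close> \<open>convex S\<close> _ \<open>x0 \<in> S\<close> _ min0] by blast
  moreover have "g (L x) + inner c x = g (L x0) + inner c x0"
    using x min0 \<open>x0 \<in> S\<close> by (simp add: order_antisym)
  ultimately show "x \<in> {x \<in> S. L x = L x0 \<and> inner c x = inner c x0}" using x by simp
qed (use min0 in auto)

lemma convex_minimizer_derivative_nonneg:
  fixes F :: "'a::real_normed_vector \<Rightarrow> real"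
  assumes deriv: "(F has_derivative F') (at x)" and "convex S" "x \<in> S" "y \<in> S"
    and min: "\<forall>z\<in>S. F x \<le> F z"
  shows "0 \<le> F' (y - x)"
proof (rule ccontr)
  assume "\<not> 0 \<le> F' (y - x)"
  let ?\<phi> = "\<lambda>t. F (x + t *\<^sub>R (y - x))"
  have "((\<lambda>t. x + t *\<^sub>R (y - x)) has_derivative (\<lambda>t. t *\<^sub>R (y - x))) (at 0)"
    by (intro derivative_eq_intros) auto
  from diff_chain_at[OF this, of F F'] deriv
  have "(?\<phi> has_derivative (\<lambda>t. F' (t *\<^sub>R (y - x)))) (at 0)"
    by (simp add: o_def)
  then have "(?\<phi> has_derivative (\<lambda>t. F' (y - x) * t)) (at 0)"
    using linear_scale[OF has_derivative_linear[OF deriv]] by (simp add: mult.commute)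
  then have "(?\<phi> has_real_derivative F' (y - x)) (at 0)"
    by (simp add: has_field_derivative_def)
  from DERIV_neg_dec_right[OF this] \<open>\<not> 0 \<le> F' (y - x)\<close>
  obtain \<delta> where "0 < \<delta>" and dec: "\<forall>h>0. h < \<delta> \<longrightarrow> ?\<phi> (0 + h) < ?\<phi> 0"
    by auto
  define h where "h = min (\<delta> / 2) 1"
  have "0 < h" "h < \<delta>" "h \<le> 1" using \<open>0 < \<delta>\<close> by (auto simp: h_def)
  have "x + h *\<^sub>R (y - x) = (1 - h) *\<^sub>R x + h *\<^sub>R y" by (simp add: algebra_simps)
  then have "x + h *\<^sub>R (y - x) \<in> S"
    using convexD_alt[OF \<open>convex S\<close> \<open>x \<in> S\<close> \<open>y \<in> S\<close> less_imp_le[OF \<open>0 < h\<close>] \<open>h \<le> 1\<close>]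
    by simp
  then have "?\<phi> 0 \<le> ?\<phi> (0 + h)" using min by simp
  moreover have "?\<phi> (0 + h) < ?\<phi> 0" using dec \<open>0 < h\<close> \<open>h < \<delta>\<close> by blast
  ultimately show False by linarith
qed

lemma has_derivative_affine_comp:
  assumes "is_gradient g gradg" and "bounded_linear L"
  shows "((\<lambda>x. g (L x) + inner c x) has_derivative
    (\<lambda>h. inner (gradg (L x)) (L h) + inner c h)) (at x)"
proof -
  have "(g has_derivative inner (gradg (L x))) (at (L x))"
    using assms(1) unfolding is_gradient_def by blast
  with bounded_linear_imp_has_derivative[OF assms(2)]
  have "((\<lambda>x. g (L x)) has_derivative (\<lambda>h. inner (gradg (L x)) (L h))) (at x)"
    using diff_chain_at by (fastforce simp: o_def)
  then show ?thesis by (auto intro!: derivative_eq_intros)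
qed

text \<open>In the application \<open>\<delta>\<close> is the optimality gap, \<open>r = \<parallel>A x - t\<^sup>*\<parallel>\<close>,
  \<open>a = \<langle>\<nabla>g(t\<^sup>*), A x - t\<^sup>*\<rangle>\<close>, \<open>e = c\<^sup>T x - s\<^sup>*\<close> and \<open>D\<close> the distance to the optimal set.\<close>

lemma quadratic_growth_inequality:
  fixes \<sigma> \<theta> M \<delta> r a e cg D :: real
  assumes "0 < \<sigma>" "\<delta> \<le> M" and cs: "\<bar>a\<bar> \<le> cg * r"
    and growth: "a + e + \<sigma> / 2 * r\<^sup>2 \<le> \<delta>" and first_order: "0 \<le> a + e"
    and "0 \<le> D" and error_bound: "D \<le> \<theta> * sqrt (r\<^sup>2 + e\<^sup>2)"
  shows "\<sigma> / (\<theta>\<^sup>2 * (1 + M * \<sigma> + 2 * cg\<^sup>2)) / 2 * D\<^sup>2 \<le> \<delta>"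
proof -
  define K where "K = 1 + M * \<sigma> + 2 * cg\<^sup>2"
  have "0 \<le> \<sigma> / 2 * r\<^sup>2" using \<open>0 < \<sigma>\<close> by simp
  have r_sq: "\<sigma> / 2 * r\<^sup>2 \<le> \<delta>" using growth first_order by linarith
  have "0 \<le> \<delta>" using r_sq \<open>0 \<le> \<sigma> / 2 * r\<^sup>2\<close> by linarith
  have e_sq: "e\<^sup>2 \<le> 2 * \<delta>\<^sup>2 + 2 * (cg * r)\<^sup>2"
  proof -
    have "\<bar>e\<bar> \<le> \<bar>\<delta> + cg * r\<bar>"
      using cs growth first_order \<open>0 \<le> \<sigma> / 2 * r\<^sup>2\<close> abs_ge_minus_self[of a] \<open>0 \<le> \<delta>\<close>
      by linarith
    then have "e\<^sup>2 \<le> (\<delta> + cg * r)\<^sup>2" by (simp add: abs_le_square_iff)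
    moreover have "(\<delta> + cg * r)\<^sup>2 + (\<delta> - cg * r)\<^sup>2 = 2 * \<delta>\<^sup>2 + 2 * (cg * r)\<^sup>2"
      by (simp add: power2_sum power2_diff)
    ultimately show ?thesis using zero_le_power2[of "\<delta> - cg * r"] by linarith
  qed
  have "\<delta>\<^sup>2 \<le> M * \<delta>" using \<open>0 \<le> \<delta>\<close> \<open>\<delta> \<le> M\<close> by (simp add: power2_eq_square mult_right_mono)
  have "r\<^sup>2 * (1 + 2 * cg\<^sup>2) \<le> 2 * \<delta> / \<sigma> * (1 + 2 * cg\<^sup>2)"
    using r_sq \<open>0 < \<sigma>\<close> by (intro mult_right_mono) (simp_all add: field_simps)
  have residual: "r\<^sup>2 + e\<^sup>2 \<le> 2 * \<delta> / \<sigma> * K"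
  proof -
    have "r\<^sup>2 + e\<^sup>2 \<le> r\<^sup>2 * (1 + 2 * cg\<^sup>2) + 2 * (M * \<delta>)"
      using e_sq \<open>\<delta>\<^sup>2 \<le> M * \<delta>\<close> by (simp add: algebra_simps)
    also have "\<dots> \<le> 2 * \<delta> / \<sigma> * (1 + 2 * cg\<^sup>2) + 2 * (M * \<delta>)"
      using \<open>r\<^sup>2 * (1 + 2 * cg\<^sup>2) \<le> 2 * \<delta> / \<sigma> * (1 + 2 * cg\<^sup>2)\<close> by simp
    also have "\<dots> = 2 * \<delta> / \<sigma> * K" using \<open>0 < \<sigma>\<close> by (simp add: K_def field_simps)
    finally show ?thesis .
  qed
  have "D\<^sup>2 \<le> \<theta>\<^sup>2 * (r\<^sup>2 + e\<^sup>2)"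
    using power_mono[OF error_bound \<open>0 \<le> D\<close>, of 2] by (simp add: power_mult_distrib)
  also have "\<dots> \<le> \<theta>\<^sup>2 * (2 * \<delta> / \<sigma> * K)" using residual by (intro mult_left_mono) simp_all
  finally have D_sq: "D\<^sup>2 \<le> \<theta>\<^sup>2 * (2 * \<delta> / \<sigma> * K)" .
  show ?thesis
  proof (cases "\<theta> = 0")
    case False
    have "0 < K" using \<open>0 \<le> \<delta>\<close> \<open>\<delta> \<le> M\<close> \<open>0 < \<sigma>\<close> unfolding K_def
      by (simp add: add_pos_nonneg)
    have "\<sigma> / (\<theta>\<^sup>2 * K) / 2 * D\<^sup>2 \<le> \<sigma> / (\<theta>\<^sup>2 * K) / 2 * (\<theta>\<^sup>2 * (2 * \<delta> / \<sigma> * K))"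
      using D_sq \<open>0 < \<sigma>\<close> \<open>0 < K\<close> by (intro mult_left_mono) auto
    also have "\<dots> = \<delta>" using \<open>0 < \<sigma>\<close> \<open>0 < K\<close> False by (simp add: field_simps)
    finally show ?thesis unfolding K_def .
  qed (simp add: \<open>0 \<le> \<delta>\<close>)
qed

lemma quadratic_growth_from_error_bound:
  fixes L :: "'a::real_inner \<Rightarrow> 'b::real_inner"
  assumes sc: "strongly_convex_grad g gradg \<sigma>" and grad: "is_gradient g gradg"
    and "bounded_linear L" and "convex S" and "xb \<in> S" "x \<in> S"
    and min: "\<forall>y\<in>S. g (L xb) + inner c xb \<le> g (L y) + inner c y"
    and gap: "g (L x) + inner c x - (g (L xb) + inner c xb) \<le> M"
    and error_bound:
      "norm (x - xb) \<le> \<theta> * sqrt ((norm (L x - L xb))\<^sup>2 + (inner c x - inner c xb)\<^sup>2)"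
  shows "\<sigma> / (\<theta>\<^sup>2 * (1 + M * \<sigma> + 2 * (norm (gradg (L xb)))\<^sup>2)) / 2 * (norm (x - xb))\<^sup>2
    \<le> g (L x) + inner c x - (g (L xb) + inner c xb)"
proof -
  let ?u = "L x - L xb" and ?e = "inner c x - inner c xb" and ?a = "inner (gradg (L xb)) (L x - L xb)"
  have "0 \<le> inner (gradg (L xb)) (L (x - xb)) + inner c (x - xb)"
    using convex_minimizer_derivative_nonneg[OF has_derivative_affine_comp[OF grad \<open>bounded_linear L\<close>]
        \<open>convex S\<close> \<open>xb \<in> S\<close> \<open>x \<in> S\<close>] min by blast
  then have first_order: "0 \<le> ?a + ?e"
    using \<open>bounded_linear L\<close> by (simp add: linear_diff bounded_linear.linear inner_diff_right)
  have growth: "?a + ?e + \<sigma> / 2 * (norm ?u)\<^sup>2 \<le> g (L x) + inner c x - (g (L xb) + inner c xb)"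
    using strongly_convex_gradD(2)[OF sc, of "L xb" "L x"] by simp
  show ?thesis
    using quadratic_growth_inequality[OF strongly_convex_gradD(1)[OF sc] gap
        Cauchy_Schwarz_ineq2 growth first_order _ error_bound] by simp
qed

lemma polyhedron_eq_INT:
  fixes C :: "real ^ 'n ^ 'p"
  shows "{x. \<forall>i. (C *v x) $ i \<le> d $ i} = (\<Inter>i. {x. inner (C $ i) x \<le> d $ i})"
  by (auto simp: matrix_vector_mul_component)

lemma convex_polyhedron:
  fixes C :: "real ^ 'n ^ 'p"
  shows "convex {x. \<forall>i. (C *v x) $ i \<le> d $ i}"
  unfolding polyhedron_eq_INT by (intro convex_INT convex_halfspace_le)

lemma closed_polyhedron:
  fixes C :: "real ^ 'n ^ 'p"
  shows "closed {x. \<forall>i. (C *v x) $ i \<le> d $ i}"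
  unfolding polyhedron_eq_INT by (simp add: closed_INT closed_halfspace_le)

lemma closed_polyhedron_slice:
  fixes A :: "real ^ 'n ^ 'm" and C :: "real ^ 'n ^ 'p"
  shows "closed {x. A *v x = t \<and> inner c x = s \<and> (\<forall>i. (C *v x) $ i \<le> d $ i)}"
proof -
  have "closed {x. A *v x = t}"
    by (intro closed_Collect_eq[OF linear_continuous_on continuous_on_const]) simp
  then have "closed ({x. A *v x = t} \<inter> {x. inner c x = s} \<inter> {x. \<forall>i. (C *v x) $ i \<le> d $ i})"
    by (intro closed_Int closed_hyperplane closed_polyhedron)
  then show ?thesis by (simp add: Collect_conj_eq Int_assoc)
qed

lemma mat_norm_nonneg: "0 \<le> mat_norm A"
  unfolding mat_norm_def by (intro onorm_pos_le) simp

lemma norm_mat_mult_le: "norm (A *v x) \<le> mat_norm A * norm x"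
  unfolding mat_norm_def by (intro onorm) simp

lemma norm_transpose_mult_le: "norm (transpose A *v v) \<le> mat_norm A * norm v"
proof (cases "transpose A *v v = 0")
  case False
  let ?w = "transpose A *v v"
  have "norm ?w * norm ?w = inner v (A *v ?w)"
    unfolding power2_eq_square[symmetric] power2_norm_eq_inner transpose_matrix_vector
    by (rule dot_lmul_matrix)
  also have "\<dots> \<le> norm v * norm (A *v ?w)"
    by (rule norm_cauchy_schwarz)
  also have "\<dots> \<le> norm v * (mat_norm A * norm ?w)"
    by (rule mult_left_mono[OF norm_mat_mult_le]) simp
  finally have "norm ?w * norm ?w \<le> (mat_norm A * norm v) * norm ?w"
    by (simp only: ac_simps)
  then show ?thesis
    by (rule mult_right_le_imp_le) (use False in simp)
qed (simp add: mat_norm_nonneg)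

lemma lipschitz_constant_nonneg:
  fixes F :: "'a::real_normed_vector \<Rightarrow> 'b::real_normed_vector" and x y :: 'a
  assumes "\<forall>z w. norm (F z - F w) \<le> L * norm (z - w)" and "x \<noteq> y"
  shows "0 \<le> L"
proof -
  have "0 \<le> L * norm (x - y)"
    using assms(1) norm_ge_zero order_trans by blast
  then show ?thesis using \<open>x \<noteq> y\<close> by (auto simp: zero_le_mult_iff)
qed

lemma is_gradient_affine_comp:
  fixes A :: "real ^ 'n ^ 'm"
  assumes "is_gradient g gradg"
  shows "is_gradient (\<lambda>x. g (A *v x) + inner c x) (\<lambda>x. transpose A *v gradg (A *v x) + c)"
  unfolding is_gradient_def
proof
  fix x
  show "((\<lambda>x. g (A *v x) + inner c x) has_derivative
      inner (transpose A *v gradg (A *v x) + c)) (at x)"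
  proof -
    have "(\<lambda>h. inner (gradg (A *v x)) (A *v h) + inner c h)
        = inner (transpose A *v gradg (A *v x) + c)"
      by (rule ext) (simp add: inner_add_left dot_lmul_matrix)
    then show ?thesis
      using has_derivative_affine_comp[OF assms matrix_vector_mul_bounded_linear, of A c x] by simp
  qed
qed

lemma lipschitz_gradient_affine_comp:
  fixes A :: "real ^ 'n ^ 'm"
  assumes lip: "\<forall>z w. norm (gradg z - gradg w) \<le> L * norm (z - w)"
  shows "norm ((transpose A *v gradg (A *v x) + c) - (transpose A *v gradg (A *v y) + c))
    \<le> L * (mat_norm A)\<^sup>2 * norm (x - y)"
proof -
  have "0 \<le> L"
    using lipschitz_constant_nonneg[OF lip, of 0 "axis undefined (1::real)"] by simp
  have "norm ((transpose A *v gradg (A *v x) + c) - (transpose A *v gradg (A *v y) + c))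
      = norm (transpose A *v (gradg (A *v x) - gradg (A *v y)))"
    by (simp add: matrix_vector_mult_diff_distrib)
  also have "\<dots> \<le> mat_norm A * (L * norm (A *v x - A *v y))"
    using norm_transpose_mult_le lip mat_norm_nonneg by (meson mult_left_mono order_trans)
  also have "\<dots> \<le> mat_norm A * (L * (mat_norm A * norm (x - y)))"
    using norm_mat_mult_le[of A "x - y"] \<open>0 \<le> L\<close> mat_norm_nonneg
    by (intro mult_left_mono) (auto simp: matrix_vector_mult_diff_distrib)
  finally show ?thesis by (simp add: power2_eq_square algebra_simps)
qed

lemma quadratic_growth_polyhedral:
  fixes A :: "real ^ 'n ^ 'm" and C :: "real ^ 'n ^ 'p" and d :: "real ^ 'p" and x :: "real ^ 'n"
  defines "P \<equiv> {x. \<forall>i. (C *v x) $ i \<le> d $ i}"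
  assumes sc: "strongly_convex_grad g gradg \<sigma>" and grad: "is_gradient g gradg"
    and Xs_eq: "Xs = {x. A *v x = t \<and> inner c x = s \<and> (\<forall>i. (C *v x) $ i \<le> d $ i)}"
    and "Xs \<noteq> {}"
    and min: "\<forall>y\<in>P. g t + s \<le> g (A *v y) + inner c y"
    and "x \<in> P" and gap: "g (A *v x) + inner c x - (g t + s) \<le> M"
    and hoffman: "norm (x - closest_point Xs x)
      \<le> \<theta> * norm (A *v x - t, inner c x - s, pos_part (C *v x - d))"
  shows "\<sigma> / (\<theta>\<^sup>2 * (1 + M * \<sigma> + 2 * (norm (gradg t))\<^sup>2)) / 2 * (norm (x - closest_point Xs x))\<^sup>2
    \<le> g (A *v x) + inner c x - (g t + s)"
proof -
  let ?xb = "closest_point Xs x"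
  have "closed Xs" unfolding Xs_eq by (rule closed_polyhedron_slice)
  then have "?xb \<in> Xs" using \<open>Xs \<noteq> {}\<close> by (rule closest_point_in_set)
  then have "?xb \<in> P" and L_xb: "A *v ?xb = t" and c_xb: "inner c ?xb = s"
    unfolding Xs_eq P_def by auto
  have "pos_part (C *v x - d) = 0"
    using \<open>x \<in> P\<close> unfolding P_def pos_part_def by (auto simp: vec_eq_iff)
  with hoffman have error_bound: "norm (x - ?xb)
      \<le> \<theta> * sqrt ((norm (A *v x - A *v ?xb))\<^sup>2 + (inner c x - inner c ?xb)\<^sup>2)"
    unfolding L_xb c_xb by (simp add: norm_Pair)
  have min_xb: "\<forall>y\<in>P. g (A *v ?xb) + inner c ?xb \<le> g (A *v y) + inner c y"
    using min unfolding L_xb c_xb .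
  have gap_xb: "g (A *v x) + inner c x - (g (A *v ?xb) + inner c ?xb) \<le> M"
    using gap unfolding L_xb c_xb .
  show ?thesis
    using quadratic_growth_from_error_bound[OF sc grad matrix_vector_mul_bounded_linear[of A]
        convex_polyhedron[of C d, folded P_def] \<open>?xb \<in> P\<close> \<open>x \<in> P\<close> min_xb gap_xb error_bound]
    unfolding L_xb c_xb .
qed

theorem theorem10:
  fixes C :: "real ^ 'n ^ 'p" and d :: "real ^ 'p"
    and A :: "real ^ 'n ^ 'm" and c :: "real ^ 'n"
    and g :: "real ^ 'm \<Rightarrow> real" and gradg :: "real ^ 'm \<Rightarrow> real ^ 'm"
    and \<sigma>g Lg :: real
    and f :: "real ^ 'n \<Rightarrow> real"
    and X Xstar :: "(real ^ 'n) set" and fstar :: real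
  assumes X_def: "X = {x. \<forall>i. (C *v x) $ i \<le> d $ i}"
    and grad: "is_gradient g gradg"
    and sc: "strongly_convex_grad g gradg \<sigma>g"
    and lip: "\<forall>z w. norm (gradg z - gradg w) \<le> Lg * norm (z - w)"
    and A_nz: "A \<noteq> 0"
    and f_def: "\<forall>x. f x = g (A *v x) + inner c x"
    and fstar_def: "fstar = Inf (f ` X)"
    and Xstar_def: "Xstar = {x \<in> X. f x = fstar \<and> (\<forall>y\<in>X. f x \<le> f y)}"
    and Xstar_ne: "Xstar \<noteq> {}"
  shows
    "(\<exists>!ts :: (real ^ 'm) \<times> real. \<forall>x\<in>Xstar. A *v x = fst ts \<and> inner c x = snd ts)
     \<and> (\<forall>tstar sstar. (\<forall>x\<in>Xstar. A *v x = tstar \<and> inner c x = sstar) \<longrightarrow>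
          Xstar = {x. A *v x = tstar \<and> inner c x = sstar \<and> (\<forall>i. (C *v x) $ i \<le> d $ i)}
          \<and> (\<forall>\<theta>::real. \<theta> > 0 \<longrightarrow>
               (\<forall>x. norm (x - closest_point Xstar x)
                     \<le> \<theta> * norm (A *v x - tstar, inner c x - sstar, pos_part (C *v x - d))) \<longrightarrow>
               (\<forall>M::real. M > 0 \<longrightarrow>
                  (\<forall>x \<in> {x \<in> X. f x - fstar \<le> M}.
                     f x - fstar \<ge>
                       (\<sigma>g / (\<theta>\<^sup>2 * (1 + M * \<sigma>g + 2 * (norm (gradg tstar))\<^sup>2))) / 2
                       * (norm (x - closest_point Xstar x))\<^sup>2))))
     \<and> (\<exists>gradf :: real ^ 'n \<Rightarrow> real ^ 'n. is_gradient f gradf \<and>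
          (\<forall>x y. norm (gradf x - gradf y) \<le> Lg * (mat_norm A)\<^sup>2 * norm (x - y)))"
proof -
  have f_eq: "f = (\<lambda>x. g (A *v x) + inner c x)" using f_def by auto
  have "convex X" unfolding X_def by (rule convex_polyhedron)
  obtain x0 where "x0 \<in> Xstar" using Xstar_ne by blast
  then have "x0 \<in> X" and min0: "\<forall>y\<in>X. f x0 \<le> f y" and "f x0 = fstar"
    using Xstar_def by auto
  have Xstar_eq: "Xstar = {x. A *v x = A *v x0 \<and> inner c x = inner c x0 \<and> (\<forall>i. (C *v x) $ i \<le> d $ i)}"
  proof -
    have "Xstar = {x \<in> X. \<forall>y\<in>X. f x \<le> f y}"
      using Xstar_def \<open>x0 \<in> X\<close> min0 \<open>f x0 = fstar\<close> by (auto intro: order_antisym)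
    also have "\<dots> = {x \<in> X. A *v x = A *v x0 \<and> inner c x = inner c x0}"
      unfolding f_eq using \<open>convex X\<close> \<open>x0 \<in> X\<close> min0[unfolded f_eq]
      by (intro minimizers_affine_comp_eq[OF sc]) simp_all
    finally show ?thesis unfolding X_def by auto
  qed
  have ts_iff: "(\<forall>x\<in>Xstar. A *v x = t \<and> inner c x = s) \<longleftrightarrow> t = A *v x0 \<and> s = inner c x0" for t s
    using Xstar_eq \<open>x0 \<in> Xstar\<close> by auto
  have optimal_set: "Xstar = {x. A *v x = t \<and> inner c x = s \<and> (\<forall>i. (C *v x) $ i \<le> d $ i)}"
    if "\<forall>x\<in>Xstar. A *v x = t \<and> inner c x = s" for t s
    using Xstar_eq ts_iff[THEN iffD1, OF that] by simp
  have growth: "\<sigma>g / (\<theta>\<^sup>2 * (1 + M * \<sigma>g + 2 * (norm (gradg tstar))\<^sup>2)) / 2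
      * (norm (x - closest_point Xstar x))\<^sup>2 \<le> f x - fstar"
    if "\<forall>x\<in>Xstar. A *v x = tstar \<and> inner c x = sstar"
      and hoffman: "\<forall>x. norm (x - closest_point Xstar x)
        \<le> \<theta> * norm (A *v x - tstar, inner c x - sstar, pos_part (C *v x - d))"
      and "x \<in> X" "f x - fstar \<le> M" for tstar sstar \<theta> M x
  proof -
    have "tstar = A *v x0" "sstar = inner c x0" using ts_iff[THEN iffD1, OF that(1)] by simp_all
    then have fstar_eq: "fstar = g tstar + sstar" using \<open>f x0 = fstar\<close> f_def by simp
    have "\<forall>y\<in>{x. \<forall>i. (C *v x) $ i \<le> d $ i}. g tstar + sstar \<le> g (A *v y) + inner c y"
      using min0 \<open>f x0 = fstar\<close> unfolding fstar_eq X_def f_eq by simp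
    moreover have "g (A *v x) + inner c x - (g tstar + sstar) \<le> M"
      using \<open>f x - fstar \<le> M\<close> unfolding fstar_eq f_eq .
    ultimately show ?thesis
      using quadratic_growth_polyhedral[OF sc grad optimal_set[OF that(1)] Xstar_ne _
          \<open>x \<in> X\<close>[unfolded X_def] _ hoffman[rule_format]]
      unfolding fstar_eq f_eq by blast
  qed
  have "is_gradient f (\<lambda>x. transpose A *v gradg (A *v x) + c)"
    unfolding f_eq by (rule is_gradient_affine_comp[OF grad])
  then have gradient: "\<exists>gradf. is_gradient f gradf \<and>
      (\<forall>x y. norm (gradf x - gradf y) \<le> Lg * (mat_norm A)\<^sup>2 * norm (x - y))"
    using lipschitz_gradient_affine_comp[OF lip, where A=A and c=c] by blast
  have unique: "\<exists>!ts :: (real ^ 'm) \<times> real. \<forall>x\<in>Xstar. A *v x = fst ts \<and> inner c x = snd ts"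
    by (rule ex1I[of _ "(A *v x0, inner c x0)"]) (auto simp: ts_iff prod_eq_iff)
  show ?thesis
    by (intro conjI allI impI ballI unique gradient)
      (erule optimal_set, rule growth, assumption+, simp_all)
qed

end
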